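(* Let $d\ge2$, let $N^+=\frac{(d-1)\sqrt{d+1}-1}{d}$, and let $\{Q_j\}_{j=1}^{d^2}$ be an NQPR in dimension $d$. Then the number of density operators $\rho$ on $\mathbb{C}^d$ with $N(\rho)=N^+$ is at most $d^2$, and equals $d^2$ if and only if there is a SIC $\{\Pi_j\}_{j=1}^{d^2}$ such that $Q_j=Q_j^+$ for all $j$.
   Context: An NQPR in dimension $d$ is a family $\{Q_j\}_{j=1}^{d^2}$ of Hermitian operators on $\mathbb{C}^d$ with $\operatorname{tr}(Q_j)=1$ and $\operatorname{tr}(Q_jQ_k)=d\,\delta_{jk}$. The negativity of a density operator $\rho$ with respect to $\{Q_j\}$ is $N(\rho)=\max\{0,-\min_j\operatorname{tr}(\rho Q_j)\}$. A SIC in dimension $d$ is a set $\{\Pi_j\}_{j=1}^{d^2}$ of rank-one projectors with $\operatorname{tr}(\Pi_j\Pi_k)=(d\delta_{jk}+1)/(d+1)$; given a SIC, $Q_j^+=-\sqrt{d+1}\,\Pi_j+\frac{1}{d}(1+\sqrt{d+1})$, with $1$ the identity in the operator term. *)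

theory Defs
  imports "HOL-Analysis.Analysis"
begin

text \<open>Operators on C^d are represented as matrices of type complex^'n^'n,
  where d = CARD('n). Families of d^2 operators are indexed by j < d^2 (0-based).\<close>

definition cadj :: "complex^'n^'n \<Rightarrow> complex^'n^'n" where
  "cadj A = (\<chi> i j. cnj (A $ j $ i))"

definition hermitian_op :: "complex^'n^'n \<Rightarrow> bool" where
  "hermitian_op A \<longleftrightarrow> cadj A = A"

definition cinner :: "complex^'n \<Rightarrow> complex^'n \<Rightarrow> complex" where
  "cinner x y = (\<Sum>i\<in>UNIV. cnj (x $ i) * y $ i)"

definition density_op :: "complex^'n^'n \<Rightarrow> bool" where
  "density_op \<rho> \<longleftrightarrow> hermitian_op \<rho> \<and> (\<forall>x. 0 \<le> Re (cinner x (\<rho> *v x))) \<and> trace \<rho> = 1"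

definition NQPR :: "(nat \<Rightarrow> complex^'n^'n) \<Rightarrow> bool" where
  "NQPR Q \<longleftrightarrow> (let d = CARD('n) in
     (\<forall>j<d^2. hermitian_op (Q j) \<and> trace (Q j) = 1) \<and>
     (\<forall>j<d^2. \<forall>k<d^2. trace (Q j ** Q k) = (if j = k then of_nat d else 0)))"

definition negativity :: "(nat \<Rightarrow> complex^'n^'n) \<Rightarrow> complex^'n^'n \<Rightarrow> real" where
  "negativity Q \<rho> = max 0 (- Min ((\<lambda>j. Re (trace (\<rho> ** Q j))) ` {..<CARD('n)^2}))"

definition rank_one_projector :: "complex^'n^'n \<Rightarrow> bool" where
  "rank_one_projector P \<longleftrightarrow> (\<exists>v. cinner v v = 1 \<and> P = (\<chi> i j. v $ i * cnj (v $ j)))"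

definition SIC :: "(nat \<Rightarrow> complex^'n^'n) \<Rightarrow> bool" where
  "SIC P \<longleftrightarrow> (let d = CARD('n) in
     (\<forall>j<d^2. rank_one_projector (P j)) \<and>
     (\<forall>j<d^2. \<forall>k<d^2. trace (P j ** P k) =
        of_real ((real d * (if j = k then 1 else 0) + 1) / (real d + 1))))"

definition Qplus :: "(nat \<Rightarrow> complex^'n^'n) \<Rightarrow> nat \<Rightarrow> complex^'n^'n" where
  "Qplus P j = (let d = real CARD('n) in
     (\<chi> a b. - of_real (sqrt (d + 1)) * (P j $ a $ b)
              + of_real ((1 + sqrt (d + 1)) / d) * (mat 1 :: complex^'n^'n) $ a $ b))"

definition Nplus :: "nat \<Rightarrow> real" where
  "Nplus d = ((real d - 1) * sqrt (real d + 1) - 1) / real d"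

end

theory Submission
  imports Defs
begin

text \<open>Let \<open>tr(\<rho> Q\<^sub>j) \<le> -N\<^sup>+\<close> and \<open>q\<^sub>k = tr(\<rho> Q\<^sub>k)\<close>. Since \<open>\<Sum>Q\<^sub>k = d \<cdot> 1\<close>, the \<open>q\<^sub>k\<close> sum to \<open>d\<close>, and
  Bessel's inequality for the orthogonal family \<open>Q\<^sub>k\<close> together with \<open>tr \<rho>\<^sup>2 \<le> 1\<close> gives
  \<open>\<Sum>q\<^sub>k\<^sup>2 \<le> d\<close>. Under these constraints, however, \<open>\<Sum>q\<^sub>k\<^sup>2 \<ge> d\<close>, with equality only if
  \<open>q\<^sub>j = -N\<^sup>+\<close> and all other \<open>q\<^sub>k\<close> are equal. So every inequality is tight, and \<open>\<rho>\<close> is the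
  operator \<open>R\<^sub>j = ((1 + s)/d - Q\<^sub>j)/s\<close>, \<open>s = \<surd>(d + 1)\<close>, obtained by solving \<open>Q\<^sub>j = Q\<^sub>j\<^sup>+\<close>
  for \<open>\<Pi>\<^sub>j\<close>; there are at most \<open>d\<^sup>2\<close> of them. The \<open>R\<^sub>j\<close> always have the SIC overlaps
  \<open>tr(R\<^sub>j R\<^sub>k) = (d \<delta>\<^sub>j\<^sub>k + 1)/(d + 1)\<close>, so if all of them are states they are pure and form a
  SIC; conversely every element of a SIC attains \<open>N\<^sup>+\<close> for the associated \<open>Q\<^sup>+\<close>.\<close>

lemma trace_matrix_mult:
  "trace ((A::'a::comm_semiring_1^'n^'n) ** B) = (\<Sum>i\<in>UNIV. \<Sum>k\<in>UNIV. A$i$k * B$k$i)"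
  by (simp add: trace_def matrix_matrix_mult_def)

lemma scaleR_matrix_component:
  "((r::real) *\<^sub>R (A::'a::real_algebra_1^'n^'m)) $ i $ k = of_real r * A$i$k"
  by (simp only: vector_scaleR_component) (simp add: scaleR_conv_of_real)

lemma trace_mult_add_left:
  "trace (((A::'a::comm_semiring_1^'n^'n) + B) ** C) = trace (A ** C) + trace (B ** C)"
  by (simp add: trace_matrix_mult distrib_right sum.distrib)

lemma trace_mult_diff_left:
  "trace (((A::'a::comm_ring_1^'n^'n) - B) ** C) = trace (A ** C) - trace (B ** C)"
  by (simp add: trace_matrix_mult left_diff_distrib sum_subtractf)

lemma trace_mult_scaleR_left:
  "trace (((r::real) *\<^sub>R (A::'a::{real_algebra_1,comm_semiring_1}^'n^'n)) ** C)
     = of_real r * trace (A ** C)"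
  unfolding trace_matrix_mult scaleR_matrix_component by (simp add: sum_distrib_left mult.assoc)

lemma trace_mult_sum_left:
  "trace ((sum f J :: 'a::comm_semiring_1^'n^'n) ** C) = (\<Sum>j\<in>J. trace (f j ** C))"
proof -
  have "trace (sum f J ** C) = (\<Sum>i\<in>UNIV. \<Sum>k\<in>UNIV. \<Sum>j\<in>J. f j$i$k * C$k$i)"
    unfolding trace_matrix_mult sum_component sum_distrib_right ..
  also have "\<dots> = (\<Sum>j\<in>J. \<Sum>i\<in>UNIV. \<Sum>k\<in>UNIV. f j$i$k * C$k$i)"
    by (subst sum.swap) (simp add: sum.swap[of _ J])
  finally show ?thesis unfolding trace_matrix_mult .
qed

lemma trace_mult_add_right:
  "trace ((C::'a::comm_semiring_1^'n^'n) ** (A + B)) = trace (C ** A) + trace (C ** B)"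
  by (metis trace_mult_add_left trace_mul_sym)

lemma trace_mult_diff_right:
  "trace ((C::'a::comm_ring_1^'n^'n) ** (A - B)) = trace (C ** A) - trace (C ** B)"
  by (metis trace_mult_diff_left trace_mul_sym)

lemma trace_mult_scaleR_right:
  "trace ((C::'a::{real_algebra_1,comm_semiring_1}^'n^'n) ** ((r::real) *\<^sub>R A))
     = of_real r * trace (C ** A)"
  by (metis trace_mult_scaleR_left trace_mul_sym)

lemma trace_mult_sum_right:
  "trace ((C::'a::comm_semiring_1^'n^'n) ** sum f J) = (\<Sum>j\<in>J. trace (C ** f j))"
  by (simp add: trace_mul_sym[of C] trace_mult_sum_left)

lemma trace_sum: "trace (sum f J :: 'a::comm_semiring_1^'n^'n) = (\<Sum>j\<in>J. trace (f j))"
  by (simp add: trace_def) (rule sum.swap)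

lemma Re_trace: "Re (trace P) = (\<Sum>i\<in>UNIV. Re (P$i$i))"
  by (simp add: trace_def)

section \<open>Hermitian and positive semidefinite matrices\<close>

lemma hermitian_op_entry: "hermitian_op A \<Longrightarrow> A $ k $ i = cnj (A $ i $ k)"
proof -
  assume "hermitian_op A"
  hence "A $ k $ i = cadj A $ k $ i" by (simp add: hermitian_op_def)
  thus ?thesis by (simp add: cadj_def)
qed

lemma hermitian_op_diag: "hermitian_op A \<Longrightarrow> A $ i $ i = of_real (Re (A $ i $ i))"
  using hermitian_op_entry[of A i i] by (metis Reals_cnj_iff complex_is_Real_iff of_real_Re)

lemma hermitian_op_add: "hermitian_op A \<Longrightarrow> hermitian_op B \<Longrightarrow> hermitian_op (A + B)"
  by (simp add: hermitian_op_def cadj_def vec_eq_iff)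

lemma hermitian_op_diff: "hermitian_op A \<Longrightarrow> hermitian_op B \<Longrightarrow> hermitian_op (A - B)"
  by (simp add: hermitian_op_def cadj_def vec_eq_iff)

lemma hermitian_op_scaleR: "hermitian_op A \<Longrightarrow> hermitian_op ((r::real) *\<^sub>R A)"
  by (simp add: hermitian_op_def cadj_def vec_eq_iff scaleR_matrix_component)

lemma hermitian_op_mat1: "hermitian_op (mat 1 :: complex^'n^'n)"
  by (simp add: hermitian_op_def cadj_def vec_eq_iff mat_def)

lemma hermitian_op_sum:
  "(\<And>j. j \<in> J \<Longrightarrow> hermitian_op (f j)) \<Longrightarrow> hermitian_op (sum f J :: complex^'n^'n)"
  by (induction J rule: infinite_finite_induct)
    (auto simp: hermitian_op_def cadj_def vec_eq_iff hermitian_op_add)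

lemma trace_square_hermitian:
  assumes "hermitian_op (X::complex^'n^'n)"
  shows "trace (X ** X) = of_real (\<Sum>i\<in>UNIV. \<Sum>k\<in>UNIV. (cmod (X$i$k))\<^sup>2)"
  unfolding trace_matrix_mult of_real_sum
proof (intro sum.cong refl)
  fix i k
  show "X $ i $ k * X $ k $ i = of_real ((cmod (X $ i $ k))\<^sup>2)"
    using hermitian_op_entry[OF assms, of k i] by (simp add: complex_mult_cnj cmod_def)
qed

lemma hermitian_trace_square_eq_0_iff:
  assumes "hermitian_op (X::complex^'n^'n)"
  shows "Re (trace (X ** X)) = 0 \<longleftrightarrow> X = 0"
proof
  assume "Re (trace (X ** X)) = 0"
  hence "(\<Sum>i\<in>UNIV. \<Sum>k\<in>UNIV. (cmod (X$i$k))\<^sup>2) = 0"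
    by (simp add: trace_square_hermitian[OF assms])
  hence "\<forall>i. \<forall>k. (cmod (X$i$k))\<^sup>2 = 0"
    by (simp add: sum_nonneg_eq_0_iff sum_nonneg)
  thus "X = 0" by (simp add: vec_eq_iff)
qed (simp add: trace_def)

definition psd :: "complex^'n^'n \<Rightarrow> bool" where
  "psd P \<longleftrightarrow> (\<forall>x. 0 \<le> Re (cinner x (P *v x)))"

lemma density_op_iff: "density_op \<rho> \<longleftrightarrow> hermitian_op \<rho> \<and> psd \<rho> \<and> trace \<rho> = 1"
  by (simp add: density_op_def psd_def)

lemma cinner_add_left: "cinner (x + y) z = cinner x z + cinner y z"
  by (simp add: cinner_def distrib_right sum.distrib)

lemma cinner_add_right: "cinner z (x + y) = cinner z x + cinner z y"
  by (simp add: cinner_def distrib_left sum.distrib)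

lemma cinner_scaleR_left: "cinner ((t::real) *\<^sub>R x) z = of_real t * cinner x z"
  by (simp only: cinner_def vector_scaleR_component)
    (simp add: sum_distrib_left scaleR_conv_of_real mult.assoc)

lemma cinner_scaleR_right: "cinner z ((t::real) *\<^sub>R x) = of_real t * cinner z x"
  by (simp only: cinner_def vector_scaleR_component)
    (simp add: sum_distrib_left scaleR_conv_of_real mult.left_commute)

lemma cinner_axis_left: "cinner (axis i c) z = cnj c * z $ i"
proof -
  have "(\<Sum>a\<in>UNIV. cnj (axis i c $ a) * z$a) = (\<Sum>a\<in>UNIV. if a = i then cnj c * z$i else 0)"
    by (rule sum.cong) (auto simp: axis_def)
  thus ?thesis by (simp add: cinner_def)
qed

lemma cinner_self: "cinner x x = of_real (\<Sum>i\<in>UNIV. (cmod (x$i))\<^sup>2)"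
  unfolding cinner_def of_real_sum
  by (intro sum.cong refl) (simp only: complex_norm_square mult.commute)

lemma cinner_self_eq_0_iff: "cinner x x = 0 \<longleftrightarrow> x = 0"
proof
  assume "cinner x x = 0"
  hence "\<forall>i. (cmod (x$i))\<^sup>2 = 0"
    unfolding cinner_self of_real_eq_0_iff by (simp add: sum_nonneg_eq_0_iff)
  thus "x = 0" by (simp add: vec_eq_iff)
qed (simp add: cinner_def)

lemma matrix_vector_mult_scaleR: "(P::complex^'n^'n) *v ((t::real) *\<^sub>R x) = t *\<^sub>R (P *v x)"
  by (simp only: vec_eq_iff matrix_vector_mult_def vec_lambda_beta vector_scaleR_component)
    (simp add: scaleR_conv_of_real sum_distrib_left mult.left_commute)

lemma matrix_vector_mult_axis: "((P::complex^'n^'n) *v axis i c) $ m = P$m$i * c"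
  by (simp add: matrix_vector_mult_def axis_def if_distrib cong: if_cong)

lemma cinner_hermitian:
  assumes "hermitian_op P"
  shows "cinner x (P *v y) = cnj (cinner y (P *v x))"
proof -
  have "cinner x (P *v y) = (\<Sum>b\<in>UNIV. \<Sum>a\<in>UNIV. cnj (x$a) * P$a$b * y$b)"
    by (simp add: cinner_def matrix_vector_mult_def sum_distrib_left mult.assoc)
      (rule sum.swap)
  also have "\<dots> = cnj (\<Sum>b\<in>UNIV. \<Sum>a\<in>UNIV. cnj (y$b) * P$b$a * x$a)"
    unfolding cnj_sum complex_cnj_mult complex_cnj_cnj
    by (intro sum.cong refl) (metis hermitian_op_entry assms mult.commute mult.assoc)
  also have "\<dots> = cnj (cinner y (P *v x))"
    by (simp add: cinner_def matrix_vector_mult_def sum_distrib_left mult.assoc)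
  finally show ?thesis .
qed

lemma nonneg_quadratic_imp_linear_coeff_0:
  fixes L M :: real
  assumes "\<And>t. 0 \<le> 2*t*L + t\<^sup>2*M" and "0 \<le> M"
  shows "L = 0"
proof (rule ccontr)
  assume "L \<noteq> 0"
  define t where "t = - L / (M + 1)"
  have L: "L = - t * (M + 1)" and "t \<noteq> 0"
    using \<open>L \<noteq> 0\<close> \<open>0 \<le> M\<close> by (auto simp: t_def)
  have "0 \<le> 2*t*L + t\<^sup>2*M" by (rule assms(1))
  also have "\<dots> = - (t\<^sup>2 * (M + 2))" by (simp add: L algebra_simps power2_eq_square)
  also have "\<dots> < 0" using \<open>t \<noteq> 0\<close> \<open>0 \<le> M\<close> by simp
  finally show False by simp
qed

text \<open>Otherwise perturbing \<open>x\<close> in the direction \<open>P x\<close> would make the form negative.\<close>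
lemma psd_kernel:
  assumes "hermitian_op P" "psd P" "Re (cinner x (P *v x)) = 0"
  shows "P *v x = 0"
proof -
  let ?y = "P *v x"
  have "0 \<le> 2*t*Re (cinner ?y (P *v x)) + t\<^sup>2 * Re (cinner ?y (P *v ?y))" for t :: real
  proof -
    have "0 \<le> Re (cinner (x + t *\<^sub>R ?y) (P *v (x + t *\<^sub>R ?y)))"
      using assms(2) psd_def by blast
    also have "cinner (x + t *\<^sub>R ?y) (P *v (x + t *\<^sub>R ?y)) =
       cinner x (P *v x) + of_real t * cinner x (P *v ?y) + of_real t * cinner ?y (P *v x)
       + of_real t * of_real t * cinner ?y (P *v ?y)"
      by (simp add: matrix_vector_right_distrib matrix_vector_mult_scaleR cinner_add_left
            cinner_add_right cinner_scaleR_left cinner_scaleR_right algebra_simps)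
    also have "cinner x (P *v ?y) = cnj (cinner ?y (P *v x))"
      by (rule cinner_hermitian[OF assms(1)])
    finally show ?thesis
      using assms(3) by (simp add: power2_eq_square)
  qed
  moreover have "0 \<le> Re (cinner ?y (P *v ?y))" using assms(2) psd_def by blast
  ultimately have "Re (cinner ?y (P *v x)) = 0" by (rule nonneg_quadratic_imp_linear_coeff_0)
  hence "cinner ?y ?y = 0" by (simp add: cinner_self)
  thus ?thesis by (simp add: cinner_self_eq_0_iff)
qed

lemma cinner_axis_matrix_axis: "cinner (axis i c) (P *v axis i c) = cnj c * P$i$i * c"
  by (simp add: cinner_axis_left matrix_vector_mult_axis mult.assoc)

lemma psd_diag_nonneg: "psd P \<Longrightarrow> 0 \<le> Re (P$i$i)"
  using cinner_axis_matrix_axis[of i 1 P] by (simp add: psd_def) metis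

text \<open>The test vector \<open>P\<^sub>a\<^sub>a e\<^sub>i - P\<^sub>a\<^sub>i e\<^sub>a\<close> of the \<open>2\<times>2\<close> Cauchy--Schwarz argument.\<close>
lemma psd_form_two_axes:
  assumes "hermitian_op P" "i \<noteq> a"
  defines "x \<equiv> axis i (P$a$a) + axis a (- P$a$i)"
  shows "Re (cinner x (P *v x)) = Re (P$a$a) * (Re (P$a$a) * Re (P$i$i) - (cmod (P$a$i))\<^sup>2)"
proof -
  define p r z where "p = Re (P$a$a)" and "r = Re (P$i$i)" and "z = P$a$i"
  have hp: "P$a$a = of_real p" and hr: "P$i$i = of_real r"
    unfolding p_def r_def by (rule hermitian_op_diag[OF assms(1)])+
  have hz: "P$i$a = cnj z" unfolding z_def by (rule hermitian_op_entry[OF assms(1)])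
  have "cinner x (P *v x) = of_real p * (of_real r * of_real p - z * cnj z)"
    using assms(2)
    by (simp add: x_def matrix_vector_right_distrib cinner_add_left cinner_axis_left
        matrix_vector_mult_axis hp hr hz z_def[symmetric] algebra_simps)
  also have "\<dots> = of_real (p * (p * r - (cmod z)\<^sup>2))"
    by (simp add: complex_norm_square[symmetric] algebra_simps)
  finally show ?thesis by (simp add: p_def r_def z_def mult.commute)
qed

lemma psd_entry_norm_le:
  assumes "hermitian_op P" "psd P"
  shows "(cmod (P$a$i))\<^sup>2 \<le> Re (P$a$a) * Re (P$i$i)"
proof (cases "i = a")
  case True
  thus ?thesis using hermitian_op_diag[OF assms(1), of a] psd_diag_nonneg[OF assms(2), of a]
    by (metis abs_of_nonneg norm_of_real power2_eq_square power2_abs order_refl)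
next
  case ne: False
  show ?thesis
  proof (cases "Re (P$a$a) = 0")
    case True
    have "Re (cinner (axis a 1) (P *v axis a 1)) = 0"
      using True by (simp add: cinner_axis_matrix_axis)
    hence "P *v axis a 1 = 0" by (rule psd_kernel[OF assms])
    hence "(P *v axis a 1) $ i = 0" by simp
    hence "P$a$i = 0" using hermitian_op_entry[OF assms(1), of a i]
      by (simp add: matrix_vector_mult_axis)
    thus ?thesis using True by simp
  next
    case False
    hence "0 < Re (P$a$a)" using psd_diag_nonneg[OF assms(2), of a] by simp
    moreover have "0 \<le> Re (P$a$a) * (Re (P$a$a) * Re (P$i$i) - (cmod (P$a$i))\<^sup>2)"
      using assms(2) psd_form_two_axes[OF assms(1) ne] by (metis psd_def)
    ultimately show ?thesis by (simp add: zero_le_mult_iff)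
  qed
qed

lemma psd_entry_norm_eq_imp_proportional:
  assumes "hermitian_op P" "psd P" "0 < Re (P$a$a)"
    and "(cmod (P$a$i))\<^sup>2 = Re (P$a$a) * Re (P$i$i)"
  shows "P$m$i * P$a$a = P$m$a * P$a$i"
proof (cases "i = a")
  case False
  let ?x = "axis i (P$a$a) + axis a (- P$a$i)"
  have "Re (cinner ?x (P *v ?x)) = 0"
    using psd_form_two_axes[OF assms(1) False] assms(4) by simp
  hence "P *v ?x = 0" by (rule psd_kernel[OF assms(1,2)])
  hence "(P *v ?x) $ m = 0" by simp
  thus ?thesis by (simp add: matrix_vector_right_distrib matrix_vector_mult_axis)
qed simp

lemma density_op_trace_square_le:
  assumes "density_op (P::complex^'n^'n)"
  shows "Re (trace (P ** P)) \<le> 1"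
proof -
  have P: "hermitian_op P" "psd P" "trace P = 1" using assms by (simp_all add: density_op_iff)
  have "Re (trace (P ** P)) = (\<Sum>i\<in>UNIV. \<Sum>k\<in>UNIV. (cmod (P$i$k))\<^sup>2)"
    by (simp add: trace_square_hermitian[OF P(1)])
  also have "\<dots> \<le> (\<Sum>i\<in>UNIV. \<Sum>k\<in>UNIV. Re (P$i$i) * Re (P$k$k))"
    by (intro sum_mono psd_entry_norm_le[OF P(1,2)])
  also have "\<dots> = Re (trace P) * Re (trace P)"
    by (simp add: Re_trace sum_product)
  finally show ?thesis using P(3) by simp
qed

text \<open>Purity makes every \<open>2\<times>2\<close> Cauchy--Schwarz inequality behind \<open>tr P\<^sup>2 \<le> 1\<close> an equality,
  so all columns are proportional to a column \<open>a\<close> with positive diagonal entry.\<close>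
lemma pure_density_op_rank_one:
  assumes "density_op (P::complex^'n^'n)" and "trace (P ** P) = 1"
  shows "rank_one_projector P"
proof -
  have P: "hermitian_op P" "psd P" "trace P = 1" using assms(1) by (simp_all add: density_op_iff)
  define f where "f i k = Re (P$i$i) * Re (P$k$k) - (cmod (P$i$k))\<^sup>2" for i k
  have f_nonneg: "0 \<le> f i k" for i k
    using psd_entry_norm_le[OF P(1,2)] by (simp add: f_def)
  have "(\<Sum>i\<in>UNIV. \<Sum>k\<in>UNIV. f i k) = Re (trace P) * Re (trace P) - Re (trace (P ** P))"
    by (simp add: f_def trace_square_hermitian[OF P(1)] Re_trace sum_product sum_subtractf)
  also have "\<dots> = 0" using assms(2) P(3) by simp
  finally have "\<forall>i k. f i k = 0"
    using f_nonneg by (simp add: sum_nonneg_eq_0_iff sum_nonneg)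
  hence eq: "(cmod (P$i$k))\<^sup>2 = Re (P$i$i) * Re (P$k$k)" for i k by (simp add: f_def)
  have "\<exists>a. 0 < Re (P$a$a)"
  proof (rule ccontr)
    assume "\<nexists>a. 0 < Re (P$a$a)"
    hence "Re (P$a$a) = 0" for a
      using psd_diag_nonneg[OF P(2), of a] by (metis linorder_not_less order_antisym)
    hence "Re (trace P) = 0" by (simp add: Re_trace)
    thus False using P(3) by simp
  qed
  then obtain a where pos: "0 < Re (P$a$a)" ..
  define p where "p = Re (P$a$a)"
  have p: "0 < p" "P$a$a = of_real p"
    using pos hermitian_op_diag[OF P(1)] by (simp_all add: p_def)
  define v :: "complex^'n" where "v = (\<chi> m. P$m$a / of_real (sqrt p))"
  have sqrt_sq: "of_real (sqrt p) * of_real (sqrt p) = (of_real p :: complex)"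
    using p by (simp flip: of_real_mult)
  have "P = (\<chi> i j. v $ i * cnj (v $ j))"
  proof (simp add: vec_eq_iff, intro allI)
    fix i j
    have "cnj (P$j$a) = P$a$j" using hermitian_op_entry[OF P(1), of a j] by simp
    hence "v$i * cnj (v$j) = P$i$a * P$a$j / (of_real (sqrt p) * of_real (sqrt p))"
      by (simp add: v_def)
    also have "P$i$a * P$a$j = P$i$j * of_real p"
      using psd_entry_norm_eq_imp_proportional[OF P(1,2) pos eq, of i j] p by simp
    also have "\<dots> / (of_real (sqrt p) * of_real (sqrt p)) = P$i$j"
      using p by (simp add: sqrt_sq)
    finally show "P$i$j = v$i * cnj (v$j)" by simp
  qed
  moreover have "cinner v v = 1"
  proof -
    have "cinner v v = of_real (\<Sum>m\<in>UNIV. (cmod (P$m$a))\<^sup>2 / p)"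
      unfolding cinner_self v_def using p by (simp add: norm_divide power_divide)
    also have "(\<Sum>m\<in>UNIV. (cmod (P$m$a))\<^sup>2 / p) = (\<Sum>m\<in>UNIV. Re (P$m$m))"
    proof (rule sum.cong[OF refl])
      fix m
      have "cmod (P$m$a) = cmod (P$a$m)" using hermitian_op_entry[OF P(1), of a m] by simp
      thus "(cmod (P$m$a))\<^sup>2 / p = Re (P$m$m)" using eq[of a m] p(1) by (simp add: p_def)
    qed
    finally show ?thesis using P(3) by (simp add: Re_trace[symmetric])
  qed
  ultimately show ?thesis unfolding rank_one_projector_def by blast
qed

lemma rank_one_projector_density_op:
  assumes "rank_one_projector P"
  shows "density_op P"
proof -
  obtain v where v: "cinner v v = 1" and P: "P = (\<chi> i j. v $ i * cnj (v $ j))"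
    using assms unfolding rank_one_projector_def by blast
  have "0 \<le> Re (cinner x (P *v x))" for x
  proof -
    have "P *v x = (\<chi> i. v $ i * cinner v x)"
      by (simp add: P vec_eq_iff matrix_vector_mult_def cinner_def sum_distrib_left mult.assoc)
    hence "cinner x (P *v x) = cnj (cinner v x) * cinner v x"
      by (simp add: cinner_def sum_distrib_right mult_ac)
    also have "\<dots> = of_real ((cmod (cinner v x))\<^sup>2)"
      by (simp only: complex_norm_square mult.commute)
    finally show ?thesis by simp
  qed
  moreover have "hermitian_op P"
    by (simp add: P hermitian_op_def cadj_def vec_eq_iff mult.commute)
  moreover have "trace P = 1"
    using v by (simp add: P trace_def cinner_def mult.commute)
  ultimately show ?thesis unfolding density_op_def by blast
qed

section \<open>The extremal value \<open>N\<^sup>+\<close>\<close>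

lemma sum_squares_eq_deviation:
  fixes q :: "'a \<Rightarrow> real"
  assumes "finite K" "K \<noteq> {}"
  defines "m \<equiv> sum q K / card K"
  shows "(\<Sum>k\<in>K. (q k)\<^sup>2) = (\<Sum>k\<in>K. (q k - m)\<^sup>2) + (sum q K)\<^sup>2 / card K"
proof -
  have "card K > 0" using assms(1,2) by (simp add: card_gt_0_iff)
  hence S: "sum q K = card K * m" by (simp add: m_def)
  have "(\<Sum>k\<in>K. (q k - m)\<^sup>2) = (\<Sum>k\<in>K. (q k)\<^sup>2) - 2 * m * sum q K + card K * m\<^sup>2"
    by (simp add: power2_diff sum_subtractf sum.distrib sum_distrib_left[symmetric] mult.assoc
        mult.commute[of _ m])
  also have "\<dots> = (\<Sum>k\<in>K. (q k)\<^sup>2) - (sum q K)\<^sup>2 / card K"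
    using \<open>card K > 0\<close> by (simp add: S power2_eq_square)
  finally show ?thesis by simp
qed

text \<open>The excess over \<open>d\<close> is \<open>d (d a\<^sup>2 + 2 a - d N\<^sup>2 - 2 N) / (d\<^sup>2 - 1)\<close>, and
  \<open>d a\<^sup>2 + 2 a - d N\<^sup>2 - 2 N = (a - N) (d (a + N) + 2)\<close>.\<close>
lemma square_excess_factor:
  fixes d N a :: real
  assumes "d\<^sup>2 - 1 \<noteq> 0" and "d * N\<^sup>2 + 2 * N = d\<^sup>2 - d - 1"
  shows "a\<^sup>2 + (d + a)\<^sup>2 / (d\<^sup>2 - 1) = d + d * (a - N) * (d * (a + N) + 2) / (d\<^sup>2 - 1)"
proof -
  have "d * (a - N) * (d * (a + N) + 2) = d * (d * a\<^sup>2 + 2 * a) - d * (d * N\<^sup>2 + 2 * N)"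
    by (simp add: algebra_simps power2_eq_square)
  also have "\<dots> = d * (d * a\<^sup>2 + 2 * a) - d * (d\<^sup>2 - d - 1)" by (simp only: assms(2))
  finally have "a\<^sup>2 * (d\<^sup>2 - 1) + (d + a)\<^sup>2 = d * (d\<^sup>2 - 1) + d * (a - N) * (d * (a + N) + 2)"
    by (simp add: algebra_simps power2_eq_square)
  thus ?thesis using assms(1) by (simp add: field_simps)
qed

context
  fixes d s :: real
  assumes s_sq: "s * s = d + 1" and d_pos: "0 < d" and s_pos: "0 < s"
begin

lemma sqrt_succ_weight_eq:
  assumes "d\<^sup>2 - 1 \<noteq> 0"
  shows "(d + ((d - 1) * s - 1) / d) / (d\<^sup>2 - 1) = (1 + s) / (d * s)"
proof -
  have "d + ((d - 1) * s - 1) / d = (1 + s) / (d * s) * (d\<^sup>2 - 1)"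
    using s_sq d_pos s_pos by (simp add: field_simps) (simp add: power2_eq_square algebra_simps)
  thus ?thesis using assms by simp
qed

lemma sqrt_succ_weight_add: "((d - 1) * s - 1) / d + (1 + s) / (d * s) = d / s"
  using s_sq d_pos s_pos by (simp add: field_simps)

lemma sqrt_succ_quadratic: "d * (((d - 1) * s - 1) / d)\<^sup>2 + 2 * (((d - 1) * s - 1) / d) = d\<^sup>2 - d - 1"
  using s_sq d_pos s_pos by (simp add: field_simps power2_eq_square)

lemma sqrt_succ_gram:
  "((1 + s) / (d * s))\<^sup>2 * d - 2 * ((1 + s) / (d * s)) / s + x * d / (s * s) = (d * x + 1) / (d + 1)"
proof -
  have "((1 + s) / (d * s))\<^sup>2 * d - 2 * ((1 + s) / (d * s)) / s = ((1 + s)\<^sup>2 - 2 * (1 + s)) / (d * (s * s))"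
    using d_pos s_pos by (simp add: field_simps power2_eq_square)
  also have "(1 + s)\<^sup>2 - 2 * (1 + s) = d" using s_sq by (simp add: power2_eq_square algebra_simps)
  finally have "((1 + s) / (d * s))\<^sup>2 * d - 2 * ((1 + s) / (d * s)) / s = 1 / (d + 1)"
    using s_sq d_pos by simp
  thus ?thesis using s_sq by (simp add: add_divide_distrib mult.commute)
qed

lemma inverse_sqrt_succ_less_offset: "1 / s < (1 + s) / d"
  using s_sq d_pos s_pos by (simp add: field_simps)

end

lemma sqrt_succ_conds:
  assumes "0 < d"
  shows "sqrt (real d + 1) * sqrt (real d + 1) = real d + 1" "0 < real d" "0 < sqrt (real d + 1)"
  using assms by simp_all

lemma Nplus_pos:
  assumes "2 \<le> d"
  shows "0 < Nplus d"
proof -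
  have "1 < sqrt (real d + 1)" using assms by simp
  also have "\<dots> \<le> (real d - 1) * sqrt (real d + 1)" using assms by simp
  finally show ?thesis using assms by (simp add: Nplus_def)
qed

lemma sum_squares_split_off:
  fixes q :: "nat \<Rightarrow> real" and d :: nat
  assumes d: "2 \<le> d" and j: "j < d\<^sup>2"
  defines "K \<equiv> {..<d\<^sup>2} - {j}"
  defines "c \<equiv> sum q K / ((real d)\<^sup>2 - 1)"
  shows "(\<Sum>k<d\<^sup>2. (q k)\<^sup>2) = (q j)\<^sup>2 + (sum q K)\<^sup>2 / ((real d)\<^sup>2 - 1) + (\<Sum>k\<in>K. (q k - c)\<^sup>2)"
proof -
  have "card K = d\<^sup>2 - 1" using j by (simp add: K_def)
  hence card_K: "card K = (real d)\<^sup>2 - 1" using j by (simp add: of_nat_diff)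
  have "(2::real)\<^sup>2 \<le> (real d)\<^sup>2" using d by (intro power_mono) auto
  hence "K \<noteq> {}" using card_K by auto
  have "(\<Sum>k<d\<^sup>2. (q k)\<^sup>2) = (q j)\<^sup>2 + (\<Sum>k\<in>K. (q k)\<^sup>2)"
    using j by (simp add: K_def sum.remove)
  also have "(\<Sum>k\<in>K. (q k)\<^sup>2) = (\<Sum>k\<in>K. (q k - c)\<^sup>2) + (sum q K)\<^sup>2 / ((real d)\<^sup>2 - 1)"
    using sum_squares_eq_deviation[of K q] \<open>K \<noteq> {}\<close> unfolding card_K c_def by (simp add: K_def)
  finally show ?thesis by simp
qed

text \<open>With \<open>a = -q\<^sub>j\<close> fixed, \<open>\<Sum>q\<^sub>k\<^sup>2\<close> is smallest when the other \<open>d\<^sup>2 - 1\<close> coordinates share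
  the mass \<open>d + a\<close> equally; the resulting value exceeds \<open>d\<close> by a multiple of \<open>a - N\<^sup>+\<close>.\<close>
lemma sum_squares_with_negative_entry:
  fixes q :: "nat \<Rightarrow> real" and d :: nat
  assumes d: "2 \<le> d" and j: "j < d\<^sup>2"
    and sum_q: "(\<Sum>k<d\<^sup>2. q k) = d" and neg: "q j \<le> - Nplus d"
  shows "d \<le> (\<Sum>k<d\<^sup>2. (q k)\<^sup>2)"
    and "(\<Sum>k<d\<^sup>2. (q k)\<^sup>2) = d \<Longrightarrow>
       q j = - Nplus d \<and> (\<forall>k<d\<^sup>2. k \<noteq> j \<longrightarrow> q k = (d + Nplus d) / ((real d)\<^sup>2 - 1))"
proof -
  define N a K where "N = Nplus d" and "a = - q j" and "K = {..<d\<^sup>2} - {j}"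
  define c where "c = (d + a) / ((real d)\<^sup>2 - 1)"
  define E where "E = (\<Sum>k\<in>K. (q k - c)\<^sup>2)"
  define W where "W = d * (a - N) * (d * (a + N) + 2) / ((real d)\<^sup>2 - 1)"
  have "0 < d" using d by simp
  have N: "0 < N" "d * N\<^sup>2 + 2 * N = (real d)\<^sup>2 - d - 1"
    using Nplus_pos[OF d] sqrt_succ_quadratic[OF sqrt_succ_conds[OF \<open>0 < d\<close>]]
    by (simp_all add: N_def Nplus_def)
  have "(2::real)\<^sup>2 \<le> (real d)\<^sup>2" using d by (intro power_mono) auto
  hence n0: "0 < (real d)\<^sup>2 - 1" by simp
  have "sum q K = d + a" using sum_q j by (simp add: K_def a_def sum.remove)
  hence "(\<Sum>k<d\<^sup>2. (q k)\<^sup>2) = a\<^sup>2 + (d + a)\<^sup>2 / ((real d)\<^sup>2 - 1) + E"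
    using sum_squares_split_off[OF d j, of q] by (simp add: a_def E_def c_def K_def)
  also have "a\<^sup>2 + (d + a)\<^sup>2 / ((real d)\<^sup>2 - 1) = d + W"
    unfolding W_def using square_excess_factor[OF _ N(2)] n0 by simp
  finally have decomposition: "(\<Sum>k<d\<^sup>2. (q k)\<^sup>2) = d + E + W" by simp
  have "N \<le> a" using neg by (simp add: a_def N_def)
  hence "0 \<le> W" using N(1) n0 by (simp add: W_def)
  moreover have "0 \<le> E" by (simp add: E_def sum_nonneg)
  ultimately show "d \<le> (\<Sum>k<d\<^sup>2. (q k)\<^sup>2)" using decomposition by simp
  assume "(\<Sum>k<d\<^sup>2. (q k)\<^sup>2) = d"
  hence "E = 0" "W = 0" using decomposition \<open>0 \<le> E\<close> \<open>0 \<le> W\<close> by linarith+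
  have "0 \<le> d * (a + N)" using \<open>N \<le> a\<close> N(1) by simp
  with \<open>W = 0\<close> have "a = N" using n0 d by (simp add: W_def)
  moreover from \<open>E = 0\<close> have "\<forall>k\<in>K. q k = c"
    by (simp add: E_def sum_nonneg_eq_0_iff K_def)
  ultimately show "q j = - Nplus d \<and> (\<forall>k<d\<^sup>2. k \<noteq> j \<longrightarrow> q k = (d + Nplus d) / ((real d)\<^sup>2 - 1))"
    by (simp add: a_def N_def c_def K_def)
qed

section \<open>NQPRs and their maximally negative states\<close>

context
  fixes Q :: "nat \<Rightarrow> complex^'n^'n"
  assumes NQPR: "NQPR Q"
begin

lemma NQPR_hermitian: "j < CARD('n)\<^sup>2 \<Longrightarrow> hermitian_op (Q j)"
  using NQPR unfolding NQPR_def Let_def by blast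

lemma NQPR_trace: "j < CARD('n)\<^sup>2 \<Longrightarrow> trace (Q j) = 1"
  using NQPR unfolding NQPR_def Let_def by blast

lemma NQPR_orthogonal:
  "j < CARD('n)\<^sup>2 \<Longrightarrow> k < CARD('n)\<^sup>2 \<Longrightarrow> trace (Q j ** Q k) = (if j = k then of_nat CARD('n) else 0)"
  using NQPR unfolding NQPR_def Let_def by blast

lemma NQPR_sum_orthogonal:
  assumes "j < CARD('n)\<^sup>2"
  shows "(\<Sum>k<CARD('n)\<^sup>2. f k * trace (Q k ** Q j)) = f j * of_nat CARD('n)"
  using assms by (simp add: NQPR_orthogonal if_distrib cong: if_cong)

text \<open>\<open>S = \<Sum>Q\<^sub>k\<close> has \<open>tr S = d\<^sup>2\<close> and, by orthogonality, \<open>tr S\<^sup>2 = d\<^sup>3\<close>, so the Hermitian matrix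
  \<open>S - d\<close> has \<open>tr (S - d)\<^sup>2 = d\<^sup>3 - 2 d\<^sup>3 + d\<^sup>3 = 0\<close>.\<close>
lemma NQPR_sum: "(\<Sum>k<CARD('n)\<^sup>2. Q k) = real CARD('n) *\<^sub>R mat 1"
proof -
  define S where "S = (\<Sum>k<CARD('n)\<^sup>2. Q k)"
  define X where "X = S - real CARD('n) *\<^sub>R mat 1"
  have "trace (S ** S) = (\<Sum>j<CARD('n)\<^sup>2. \<Sum>k<CARD('n)\<^sup>2. trace (Q k ** Q j))"
    by (simp add: S_def trace_mult_sum_left trace_mult_sum_right)
  also have "\<dots> = (\<Sum>j<CARD('n)\<^sup>2. of_nat CARD('n))"
    by (intro sum.cong refl) (simp add: NQPR_sum_orthogonal[of _ "\<lambda>_. 1", simplified])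
  finally have SS: "trace (S ** S) = of_nat (CARD('n)\<^sup>2 * CARD('n))" by simp
  have S1: "trace (S ** mat 1) = of_nat (CARD('n)\<^sup>2)"
    by (simp add: S_def trace_sum NQPR_trace)
  have "hermitian_op X"
    unfolding X_def S_def
    by (intro hermitian_op_diff hermitian_op_sum hermitian_op_scaleR hermitian_op_mat1 NQPR_hermitian)
      simp
  moreover have "trace (X ** X) = 0"
    unfolding X_def trace_mult_diff_left trace_mult_diff_right trace_mult_scaleR_left
      trace_mult_scaleR_right trace_mul_sym[of "mat 1" S] SS S1
    by (simp add: trace_I power2_eq_square)
  ultimately have "X = 0" using hermitian_trace_square_eq_0_iff by force
  thus ?thesis by (simp add: X_def S_def)
qed

text \<open>Bessel's identity for the orthogonal family \<open>Q\<^sub>k/\<surd>d\<close>.\<close>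
lemma NQPR_bessel:
  assumes "hermitian_op X"
  defines "q \<equiv> \<lambda>k. Re (trace (X ** Q k))"
  defines "Y \<equiv> X - (1 / real CARD('n)) *\<^sub>R (\<Sum>k<CARD('n)\<^sup>2. q k *\<^sub>R Q k)"
  shows "hermitian_op Y"
    and "real CARD('n) * Re (trace (X ** X))
           = (\<Sum>k<CARD('n)\<^sup>2. (q k)\<^sup>2) + real CARD('n) * Re (trace (Y ** Y))"
proof -
  define d where "d = real CARD('n)"
  define A where "A = (\<Sum>k<CARD('n)\<^sup>2. q k *\<^sub>R Q k)"
  show "hermitian_op Y"
    unfolding Y_def
    by (intro hermitian_op_diff assms(1) hermitian_op_scaleR hermitian_op_sum NQPR_hermitian) simp
  have XA: "Re (trace (X ** A)) = (\<Sum>k<CARD('n)\<^sup>2. (q k)\<^sup>2)"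
    by (simp add: A_def trace_mult_sum_right trace_mult_scaleR_right q_def power2_eq_square)
  have AX: "Re (trace (A ** X)) = (\<Sum>k<CARD('n)\<^sup>2. (q k)\<^sup>2)"
    using XA trace_mul_sym[of A X] by simp
  have AA: "Re (trace (A ** A)) = d * (\<Sum>k<CARD('n)\<^sup>2. (q k)\<^sup>2)"
    by (simp add: A_def trace_mult_sum_left trace_mult_scaleR_left trace_mult_sum_right
        trace_mult_scaleR_right mult.assoc[symmetric] NQPR_sum_orthogonal flip: of_real_mult)
      (simp add: d_def sum_distrib_left power2_eq_square mult_ac)
  have "0 < d" by (simp add: d_def)
  have "Re (trace (Y ** Y)) = Re (trace (X ** X)) - (1 / d) * Re (trace (X ** A))
      - (1 / d) * Re (trace (A ** X)) + (1 / d) * ((1 / d) * Re (trace (A ** A)))"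
    by (simp add: Y_def A_def[symmetric] d_def[symmetric] trace_mult_diff_left
        trace_mult_diff_right trace_mult_scaleR_left trace_mult_scaleR_right)
      (simp add: diff_divide_distrib)
  also have "\<dots> = Re (trace (X ** X)) - (\<Sum>k<CARD('n)\<^sup>2. (q k)\<^sup>2) / d"
    unfolding XA AX AA using \<open>0 < d\<close> by simp
  finally show "d * Re (trace (X ** X)) = (\<Sum>k<CARD('n)\<^sup>2. (q k)\<^sup>2) + d * Re (trace (Y ** Y))"
    using \<open>0 < d\<close> by (simp add: field_simps)
qed

end

lemma sum_scaleR_const_except:
  fixes f :: "'a \<Rightarrow> 'b::real_vector"
  assumes "finite A" "j \<in> A" "\<And>k. k \<in> A - {j} \<Longrightarrow> q k = c"
  shows "(\<Sum>k\<in>A. q k *\<^sub>R f k) = q j *\<^sub>R f j + c *\<^sub>R (sum f A - f j)"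
proof -
  have "(\<Sum>k\<in>A. q k *\<^sub>R f k) = q j *\<^sub>R f j + (\<Sum>k\<in>A - {j}. c *\<^sub>R f k)"
    using assms by (simp add: sum.remove)
  also have "(\<Sum>k\<in>A - {j}. c *\<^sub>R f k) = c *\<^sub>R (sum f A - f j)"
    using assms(1,2) by (simp add: sum_diff1 scaleR_diff_right scaleR_sum_right)
  finally show ?thesis .
qed

lemma negativity_attained:
  fixes Q :: "nat \<Rightarrow> complex^'n^'n"
  assumes "negativity Q \<rho> = x" and "0 < x"
  obtains j where "j < CARD('n)\<^sup>2" and "Re (trace (\<rho> ** Q j)) = - x"
proof -
  let ?f = "\<lambda>j. Re (trace (\<rho> ** Q j))"
  have "Min (?f ` {..<CARD('n)\<^sup>2}) = - x"
    using assms by (auto simp: negativity_def max_def split: if_splits)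
  moreover have "Min (?f ` {..<CARD('n)\<^sup>2}) \<in> ?f ` {..<CARD('n)\<^sup>2}"
    by (intro Min_in) (simp_all add: lessThan_empty_iff)
  ultimately show ?thesis using that by auto
qed

lemma negativity_eqI:
  fixes Q :: "nat \<Rightarrow> complex^'n^'n"
  assumes "j < CARD('n)\<^sup>2" and "Re (trace (\<rho> ** Q j)) = - x"
    and "\<And>k. k < CARD('n)\<^sup>2 \<Longrightarrow> - x \<le> Re (trace (\<rho> ** Q k))" and "0 \<le> x"
  shows "negativity Q \<rho> = x"
proof -
  have "Min ((\<lambda>k. Re (trace (\<rho> ** Q k))) ` {..<CARD('n)\<^sup>2}) = - x"
    using assms(1-3) by (intro Min_eqI) (auto intro: image_eqI[of _ _ j])
  thus ?thesis using assms(4) by (simp add: negativity_def)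
qed

text \<open>The solution \<open>\<Pi>\<^sub>j\<close> of \<open>Q\<^sub>j = Q\<^sub>j\<^sup>+\<close>.\<close>
definition extremal_state :: "(nat \<Rightarrow> complex^'n^'n) \<Rightarrow> nat \<Rightarrow> complex^'n^'n" where
  "extremal_state Q j = (let d = real CARD('n); s = sqrt (d + 1)
     in (1 / s) *\<^sub>R (((1 + s) / d) *\<^sub>R mat 1 - Q j))"

lemma extremal_state_eq:
  fixes Q :: "nat \<Rightarrow> complex^'n^'n"
  defines "s \<equiv> sqrt (real CARD('n) + 1)"
  shows "extremal_state Q j = ((1 + s) / (real CARD('n) * s)) *\<^sub>R mat 1 - (1 / s) *\<^sub>R Q j"
  by (simp add: extremal_state_def Let_def s_def scaleR_diff_right)

lemma Qplus_eq:
  "Qplus P j = (- sqrt (real CARD('n) + 1)) *\<^sub>R P j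
     + ((1 + sqrt (real CARD('n) + 1)) / real CARD('n)) *\<^sub>R (mat 1 :: complex^'n^'n)"
  unfolding Qplus_def Let_def vec_eq_iff
  by (simp only: vector_add_component vector_scaleR_component vec_lambda_beta)
    (simp add: scaleR_conv_of_real)

lemma Qplus_extremal_state:
  fixes Q :: "nat \<Rightarrow> complex^'n^'n"
  shows "Qplus (extremal_state Q) j = Q j"
  using sqrt_succ_conds[of "CARD('n)"]
  by (simp add: Qplus_eq extremal_state_def Let_def scaleR_diff_right)

lemma extremal_state_eqI:
  fixes Q :: "nat \<Rightarrow> complex^'n^'n"
  shows "Q j = Qplus P j \<Longrightarrow> extremal_state Q j = P j"
  using sqrt_succ_conds[of "CARD('n)"]
  by (simp add: Qplus_eq extremal_state_def Let_def scaleR_add_right)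

lemma inj_on_extremal_state:
  fixes Q :: "nat \<Rightarrow> complex^'n^'n"
  assumes "NQPR Q"
  shows "inj_on (extremal_state Q) {..<CARD('n)\<^sup>2}"
proof (rule inj_onI)
  fix j k assume j: "j \<in> {..<CARD('n)\<^sup>2}" and k: "k \<in> {..<CARD('n)\<^sup>2}"
    and "extremal_state Q j = extremal_state Q k"
  hence "Q j = Q k"
    using sqrt_succ_conds[of "CARD('n)"] by (simp add: extremal_state_def Let_def)
  hence "trace (Q j ** Q k) \<noteq> 0" using NQPR_orthogonal[OF assms, of j j] j by simp
  thus "j = k" using NQPR_orthogonal[OF assms, of j k] j k by (auto split: if_splits)
qed

lemma trace_extremal_state_mult:
  fixes Q :: "nat \<Rightarrow> complex^'n^'n"
  assumes NQPR: "NQPR Q" and j: "j < CARD('n)\<^sup>2" and k: "k < CARD('n)\<^sup>2"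
  shows "trace (extremal_state Q j ** extremal_state Q k)
    = of_real ((real CARD('n) * (if j = k then 1 else 0) + 1) / (real CARD('n) + 1))"
proof -
  define d s where "d = real CARD('n)" and "s = sqrt (d + 1)"
  define c where "c = (1 + s) / (d * s)"
  have s: "s * s = d + 1" "0 < d" "0 < s" using sqrt_succ_conds[of "CARD('n)"] by (simp_all add: d_def s_def)
  have R: "extremal_state Q i = c *\<^sub>R mat 1 - (1 / s) *\<^sub>R Q i" for i
    by (simp add: extremal_state_eq c_def s_def d_def)
  have "trace (extremal_state Q j ** extremal_state Q k)
      = of_real c * of_real c * of_real d - 2 * of_real c / of_real s
        + trace (Q j ** Q k) / (of_real s * of_real s)"
    unfolding R trace_mult_diff_left trace_mult_diff_right trace_mult_scaleR_left
      trace_mult_scaleR_right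
    using NQPR_trace[OF NQPR j] NQPR_trace[OF NQPR k] s(3)
    by (simp add: trace_mul_sym[of "mat 1" "Q j"] trace_I d_def) (simp add: field_simps)
  also have "\<dots> = of_real (c\<^sup>2 * d - 2 * c / s + (if j = k then 1 else 0) * d / (s * s))"
    using NQPR_orthogonal[OF NQPR j k] by (simp add: d_def power2_eq_square)
  also have "\<dots> = of_real ((d * (if j = k then 1 else 0) + 1) / (d + 1))"
    unfolding c_def sqrt_succ_gram[OF s] ..
  finally show ?thesis by (simp add: d_def)
qed

lemma extremal_state_expansion:
  fixes Q :: "nat \<Rightarrow> complex^'n^'n"
  assumes NQPR: "NQPR Q" and d: "2 \<le> CARD('n)" and j: "j < CARD('n)\<^sup>2"
  defines "N \<equiv> Nplus CARD('n)"
  defines "q \<equiv> \<lambda>k. if k = j then - N else (real CARD('n) + N) / ((real CARD('n))\<^sup>2 - 1)"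
  shows "(1 / real CARD('n)) *\<^sub>R (\<Sum>k<CARD('n)\<^sup>2. q k *\<^sub>R Q k) = extremal_state Q j"
proof -
  define d s where "d = real CARD('n)" and "s = sqrt (d + 1)"
  define c where "c = (1 + s) / (d * s)"
  have s: "s * s = d + 1" "0 < d" "0 < s"
    using sqrt_succ_conds[of "CARD('n)"] by (simp_all add: d_def s_def)
  have "(2::real)\<^sup>2 \<le> d\<^sup>2" using d unfolding d_def by (intro power_mono) auto
  hence "(d + N) / (d\<^sup>2 - 1) = c"
    using sqrt_succ_weight_eq[OF s] by (simp add: N_def Nplus_def c_def d_def s_def)
  hence "(\<Sum>k<CARD('n)\<^sup>2. q k *\<^sub>R Q k) = (- N) *\<^sub>R Q j + c *\<^sub>R (d *\<^sub>R mat 1 - Q j)"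
    using sum_scaleR_const_except[of "{..<CARD('n)\<^sup>2}" j q c Q] j
    by (simp add: q_def d_def NQPR_sum[OF NQPR])
  hence "(1 / d) *\<^sub>R (\<Sum>k<CARD('n)\<^sup>2. q k *\<^sub>R Q k) = c *\<^sub>R mat 1 - ((N + c) / d) *\<^sub>R Q j"
    using s(2) by (simp add: scaleR_diff_right scaleR_add_right add_divide_distrib scaleR_add_left)
  also have "(N + c) / d = 1 / s"
    using sqrt_succ_weight_add[OF s] s by (simp add: N_def c_def Nplus_def d_def s_def field_simps)
  finally show ?thesis by (simp add: extremal_state_eq c_def d_def s_def)
qed

lemma density_op_negative_imp_extremal_state:
  fixes Q :: "nat \<Rightarrow> complex^'n^'n"
  assumes NQPR: "NQPR Q" and d: "2 \<le> CARD('n)" and \<rho>: "density_op \<rho>"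
    and j: "j < CARD('n)\<^sup>2" and neg: "Re (trace (\<rho> ** Q j)) \<le> - Nplus CARD('n)"
  shows "\<rho> = extremal_state Q j"
proof -
  define D d where "D = CARD('n)\<^sup>2" and "d = real CARD('n)"
  define q where "q k = Re (trace (\<rho> ** Q k))" for k
  define Y where "Y = \<rho> - (1 / d) *\<^sub>R (\<Sum>k<D. q k *\<^sub>R Q k)"
  have herm: "hermitian_op \<rho>" and tr: "trace \<rho> = 1" using \<rho> by (simp_all add: density_op_def)
  have "0 < d" by (simp add: d_def)
  have sum_q: "(\<Sum>k<D. q k) = d"
    by (simp add: q_def D_def d_def Re_sum[symmetric] trace_mult_sum_right[symmetric]
        NQPR_sum[OF NQPR] trace_mult_scaleR_right tr)
  have "hermitian_op Y" and bessel: "d * Re (trace (\<rho> ** \<rho>)) = (\<Sum>k<D. (q k)\<^sup>2) + d * Re (trace (Y ** Y))"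
    using NQPR_bessel[OF NQPR herm] by (simp_all add: Y_def q_def D_def d_def)
  have "0 \<le> d * Re (trace (Y ** Y))"
    using \<open>0 < d\<close> by (simp add: trace_square_hermitian[OF \<open>hermitian_op Y\<close>] sum_nonneg)
  moreover have "d * Re (trace (\<rho> ** \<rho>)) \<le> d"
    using density_op_trace_square_le[OF \<rho>] \<open>0 < d\<close> by simp
  moreover have "d \<le> (\<Sum>k<D. (q k)\<^sup>2)"
    using sum_squares_with_negative_entry(1)[OF d j] sum_q neg by (simp add: q_def D_def d_def)
  ultimately have "(\<Sum>k<D. (q k)\<^sup>2) = d" and "d * Re (trace (Y ** Y)) = 0"
    using bessel by linarith+
  hence "Y = 0" using hermitian_trace_square_eq_0_iff[OF \<open>hermitian_op Y\<close>] \<open>0 < d\<close> by simp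
  hence "\<rho> = (1 / d) *\<^sub>R (\<Sum>k<D. q k *\<^sub>R Q k)" by (simp add: Y_def)
  also have "(\<Sum>k<D. q k *\<^sub>R Q k) = (\<Sum>k<D. (if k = j then - Nplus CARD('n)
      else (CARD('n) + Nplus CARD('n)) / ((real CARD('n))\<^sup>2 - 1)) *\<^sub>R Q k)"
    using sum_squares_with_negative_entry(2)[OF d j] sum_q neg \<open>(\<Sum>k<D. (q k)\<^sup>2) = d\<close>
    by (intro sum.cong refl) (auto simp: q_def D_def d_def)
  finally show ?thesis using extremal_state_expansion[OF NQPR d j] by (simp add: d_def D_def)
qed

lemma SIC_density_op:
  fixes P :: "nat \<Rightarrow> complex^'n^'n"
  assumes "SIC P" and "j < CARD('n)\<^sup>2"
  shows "density_op (P j)"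
proof (rule rank_one_projector_density_op)
  show "rank_one_projector (P j)" using assms unfolding SIC_def Let_def by blast
qed

lemma SIC_negativity:
  fixes Q P :: "nat \<Rightarrow> complex^'n^'n"
  assumes d: "2 \<le> CARD('n)" and SIC: "SIC P" and Q: "\<forall>j<CARD('n)\<^sup>2. Q j = Qplus P j"
    and j: "j < CARD('n)\<^sup>2"
  shows "negativity Q (P j) = Nplus CARD('n)"
proof -
  define d s where "d = real CARD('n)" and "s = sqrt (d + 1)"
  have s: "s * s = d + 1" "0 < d" "0 < s"
    using sqrt_succ_conds[of "CARD('n)"] by (simp_all add: d_def s_def)
  have trace_P: "trace (P j) = 1" using SIC_density_op[OF SIC j] density_op_iff by blast
  have trace_PQ: "Re (trace (P j ** Q k)) = (1 + s) / d - s * (d * (if j = k then 1 else 0) + 1) / (d + 1)"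
    if "k < CARD('n)\<^sup>2" for k
  proof -
    have "trace (P j ** P k) = of_real ((d * (if j = k then 1 else 0) + 1) / (d + 1))"
      using SIC j that unfolding SIC_def Let_def d_def by blast
    moreover have "trace (P j ** Q k) = of_real (- s) * trace (P j ** P k) + of_real ((1 + s) / d)"
      unfolding Q[rule_format, OF that] Qplus_eq trace_mult_add_right trace_mult_scaleR_right
        d_def[symmetric] s_def[symmetric]
      using trace_P by simp
    ultimately show ?thesis by simp
  qed
  show ?thesis
  proof (rule negativity_eqI[OF j])
    have "Nplus CARD('n) = s - (1 + s) / d"
      unfolding Nplus_def d_def[symmetric] s_def[symmetric] using s by (simp add: field_simps)
    thus "Re (trace (P j ** Q j)) = - Nplus CARD('n)"
      using trace_PQ[OF j] s by simp
    show "- Nplus CARD('n) \<le> Re (trace (P j ** Q k))" if "k < CARD('n)\<^sup>2" for k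
    proof (cases "j = k")
      case False
      have "s / (d + 1) = 1 / s" using s by (simp add: field_simps)
      hence "Re (trace (P j ** Q k)) = (1 + s) / d - 1 / s" using trace_PQ[OF that] False by simp
      also have "\<dots> > 0" using inverse_sqrt_succ_less_offset[OF s] by simp
      finally show ?thesis using Nplus_pos[OF d] by simp
    qed (use \<open>Re (trace (P j ** Q j)) = - Nplus CARD('n)\<close> in simp)
    show "0 \<le> Nplus CARD('n)" using Nplus_pos[OF d] by simp
  qed
qed

lemma maximally_negative_states_subset:
  fixes Q :: "nat \<Rightarrow> complex^'n^'n"
  assumes "NQPR Q" and "2 \<le> CARD('n)"
  shows "{\<rho>. density_op \<rho> \<and> negativity Q \<rho> = Nplus CARD('n)} \<subseteq> extremal_state Q ` {..<CARD('n)\<^sup>2}"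
proof
  fix \<rho> assume "\<rho> \<in> {\<rho>. density_op \<rho> \<and> negativity Q \<rho> = Nplus CARD('n)}"
  hence \<rho>: "density_op \<rho>" and "negativity Q \<rho> = Nplus CARD('n)" by auto
  then obtain j where j: "j < CARD('n)\<^sup>2" and "Re (trace (\<rho> ** Q j)) = - Nplus CARD('n)"
    using negativity_attained Nplus_pos[OF assms(2)] by metis
  hence "\<rho> = extremal_state Q j"
    using density_op_negative_imp_extremal_state[OF assms \<rho> j] by simp
  thus "\<rho> \<in> extremal_state Q ` {..<CARD('n)\<^sup>2}" using j by simp
qed

lemma SIC_extremal_state:
  fixes Q :: "nat \<Rightarrow> complex^'n^'n"
  assumes "NQPR Q" and "\<And>j. j < CARD('n)\<^sup>2 \<Longrightarrow> density_op (extremal_state Q j)"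
  shows "SIC (extremal_state Q)"
  unfolding SIC_def Let_def
proof (intro conjI allI impI)
  fix j k assume j: "j < CARD('n)\<^sup>2" and k: "k < CARD('n)\<^sup>2"
  show "trace (extremal_state Q j ** extremal_state Q k)
    = of_real ((real CARD('n) * (if j = k then 1 else 0) + 1) / (real CARD('n) + 1))"
    by (rule trace_extremal_state_mult[OF assms(1) j k])
next
  fix j assume j: "j < CARD('n)\<^sup>2"
  have "trace (extremal_state Q j ** extremal_state Q j) = 1"
    using trace_extremal_state_mult[OF assms(1) j j] by simp
  thus "rank_one_projector (extremal_state Q j)"
    using pure_density_op_rank_one assms(2)[OF j] by blast
qed

lemma maximally_negative_states_eq_iff_SIC:
  fixes Q :: "nat \<Rightarrow> complex^'n^'n"
  assumes NQPR: "NQPR Q" and d: "2 \<le> CARD('n)"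
  shows "{\<rho>. density_op \<rho> \<and> negativity Q \<rho> = Nplus CARD('n)} = extremal_state Q ` {..<CARD('n)\<^sup>2}
    \<longleftrightarrow> (\<exists>P. SIC P \<and> (\<forall>j<CARD('n)\<^sup>2. Q j = Qplus P j))"
    (is "?T = ?R \<longleftrightarrow> _")
proof
  assume "?T = ?R"
  hence "SIC (extremal_state Q)" by (intro SIC_extremal_state[OF NQPR]) auto
  thus "\<exists>P. SIC P \<and> (\<forall>j<CARD('n)\<^sup>2. Q j = Qplus P j)" using Qplus_extremal_state by metis
next
  assume "\<exists>P. SIC P \<and> (\<forall>j<CARD('n)\<^sup>2. Q j = Qplus P j)"
  then obtain P where "SIC P" and Q: "\<forall>j<CARD('n)\<^sup>2. Q j = Qplus P j" by blast
  have "?R \<subseteq> ?T"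
  proof
    fix \<rho> assume "\<rho> \<in> ?R"
    then obtain j where j: "j < CARD('n)\<^sup>2" and "\<rho> = extremal_state Q j" by auto
    hence "\<rho> = P j" using extremal_state_eqI Q by blast
    thus "\<rho> \<in> ?T" using SIC_density_op[OF \<open>SIC P\<close> j] SIC_negativity[OF d \<open>SIC P\<close> Q j] by simp
  qed
  thus "?T = ?R" using maximally_negative_states_subset[OF NQPR d] by blast
qed

theorem theorem2:
  fixes Q :: "nat \<Rightarrow> complex^'n^'n"
  assumes "CARD('n) \<ge> 2"
    and "NQPR Q"
  shows "finite {\<rho>. density_op \<rho> \<and> negativity Q \<rho> = Nplus CARD('n)}
       \<and> card {\<rho>. density_op \<rho> \<and> negativity Q \<rho> = Nplus CARD('n)} \<le> CARD('n)^2
       \<and> (card {\<rho>. density_op \<rho> \<and> negativity Q \<rho> = Nplus CARD('n)} = CARD('n)^2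
            \<longleftrightarrow> (\<exists>P. SIC P \<and> (\<forall>j<CARD('n)^2. Q j = Qplus P j)))"
proof -
  define T where "T = {\<rho>. density_op \<rho> \<and> negativity Q \<rho> = Nplus CARD('n)}"
  define R where "R = extremal_state Q ` {..<CARD('n)\<^sup>2}"
  have "T \<subseteq> R" and "finite R" and card_R: "card R = CARD('n)\<^sup>2"
    using maximally_negative_states_subset[OF assms(2,1)] card_image[OF inj_on_extremal_state[OF assms(2)]]
    by (simp_all add: T_def R_def)
  have "finite T" using \<open>T \<subseteq> R\<close> \<open>finite R\<close> by (rule finite_subset)
  moreover have "card T \<le> CARD('n)\<^sup>2" using card_mono[OF \<open>finite R\<close> \<open>T \<subseteq> R\<close>] card_R by simp
  moreover have "card T = CARD('n)\<^sup>2 \<longleftrightarrow> T = R"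
    using card_subset_eq[OF \<open>finite R\<close> \<open>T \<subseteq> R\<close>] card_R by auto
  ultimately show ?thesis
    using maximally_negative_states_eq_iff_SIC[OF assms(2,1)] unfolding T_def R_def by blast
qed

end
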